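(* Let $(\Omega=\mathcal{A}\otimes\bigwedge(\mathbb{C}^2),\mathrm{d},\bar{\mathrm{d}})$ be a bidifferential graded algebra with $\mathcal{A}=\mathrm{Mat}_{n_0}(\mathcal{B})$, $\mathcal{B}$ a unital complex algebra, $n_0\in\mathbb{N}$, and $\mathrm{d},\bar{\mathrm{d}}$ respecting matrix sizes. Let $n,m\ge n_0$ and let $\mathbf{P},\hat{\mathbf{K}}\in\mathrm{Mat}(n,n,\mathcal{B})$, $\mathbf{V}\in\mathrm{Mat}(n,m,\mathcal{B})$, $\hat{\mathbf{U}}\in\mathrm{Mat}(m,n,\mathcal{B})$ be $\mathrm{d}$- and $\bar{\mathrm{d}}$-constant. Let $\hat{\mathbf{\Xi}}\in\mathrm{Mat}(n,n,\mathcal{B})$ satisfy $$\bar{\mathrm{d}}\hat{\mathbf{\Xi}}=(\mathrm{d}\hat{\mathbf{\Xi}})\,\mathbf{P}\qquad\text{and}\qquad [\mathbf{P},\hat{\mathbf{K}}\hat{\mathbf{\Xi}}]=\mathbf{V}\hat{\mathbf{U}}\hat{\mathbf{\Xi}}.$$ If $\mathbf{I}-\hat{\mathbf{K}}\hat{\mathbf{\Xi}}$ is invertible, then $\phi=\hat{\mathbf{U}}\,\hat{\mathbf{\Xi}}\,(\mathbf{I}-\hat{\mathbf{K}}\hat{\mathbf{\Xi}})^{-1}\mathbf{V}$ solves $\bar{\mathrm{d}}\mathrm{d}\phi=\mathrm{d}\phi\,\mathrm{d}\phi$.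
   Context: A bidifferential graded algebra is a graded algebra $\Omega=\bigoplus_{r\ge0}\Omega^r$ with two degree-one linear maps $\mathrm{d},\bar{\mathrm{d}}$ satisfying $\mathrm{d}^2=\bar{\mathrm{d}}^2=\mathrm{d}\bar{\mathrm{d}}+\bar{\mathrm{d}}\mathrm{d}=0$ and the graded Leibniz rule. $\mathrm{Mat}_{n_0}(\mathcal{B}):=\bigoplus_{n',n\ge n_0}\mathrm{Mat}(n',n,\mathcal{B})$ with the matrix product extended by zero for non-matching sizes; elements of $\bigwedge(\mathbb{C}^2)$ are constants; "respecting matrix sizes" means $\mathrm{d},\bar{\mathrm{d}}$ map $\mathrm{Mat}(n',n,\mathcal{B})\otimes\bigwedge(\mathbb{C}^2)$ into itself. $\mathrm{d}$- and $\bar{\mathrm{d}}$-constant means annihilated by both maps. $\mathbf{I}=I_n$. *)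

theory Defs
  imports Complex_Main "Jordan_Normal_Form.Matrix"
begin

text \<open>A unital complex algebra structure on a unital ring 'b is given by a unital ring
homomorphism sc from the complex numbers into the centre of 'b; complex scalar
multiplication is c . x = sc c * x.\<close>

definition unital_calg :: "(complex \<Rightarrow> 'b::ring_1) \<Rightarrow> bool" where
  "unital_calg sc \<longleftrightarrow> sc 1 = 1 \<and> (\<forall>a b. sc (a + b) = sc a + sc b)
     \<and> (\<forall>a b. sc (a * b) = sc a * sc b) \<and> (\<forall>c x. sc c * x = x * sc c)"

text \<open>An element of the block Mat(p,q,B) (x) Wedge(C^2) of Omega: four p x q matrices,
indexed by (e1,e2), the coefficient of xi1^e1 xi2^e2 (canonical order xi1 xi2).\<close>

type_synonym 'b form = "bool \<times> bool \<Rightarrow> 'b mat"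

definition fdeg :: "bool \<times> bool \<Rightarrow> nat" where
  "fdeg S = (if fst S then 1 else 0) + (if snd S then 1 else 0)"

definition blk :: "nat \<Rightarrow> nat \<Rightarrow> 'b::zero form set" where
  "blk p q = {\<omega>. \<forall>S. \<omega> S \<in> carrier_mat p q}"

definition zf :: "nat \<Rightarrow> nat \<Rightarrow> 'b::zero form" where
  "zf p q = (\<lambda>S. 0\<^sub>m p q)"

text \<open>homogeneous of degree r (for r \<ge> 3 this means zero)\<close>
definition homog :: "nat \<Rightarrow> 'b::zero form \<Rightarrow> bool" where
  "homog r \<omega> \<longleftrightarrow> (\<forall>S. fdeg S \<noteq> r \<longrightarrow> \<omega> S = 0\<^sub>m (dim_row (\<omega> S)) (dim_col (\<omega> S)))"

definition fadd :: "'b::plus form \<Rightarrow> 'b form \<Rightarrow> 'b form" where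
  "fadd \<omega> \<eta> = (\<lambda>S. \<omega> S + \<eta> S)"

definition fsmult :: "(complex \<Rightarrow> 'b::times) \<Rightarrow> complex \<Rightarrow> 'b form \<Rightarrow> 'b form" where
  "fsmult sc c \<omega> = (\<lambda>S. sc c \<cdot>\<^sub>m \<omega> S)"

text \<open>Product in Omega: (A xi_S)(B xi_T) = A B xi_S xi_T, with xi_i xi_i = 0 and
xi2 xi1 = - xi1 xi2.\<close>
definition fmult :: "'b::ring_1 form \<Rightarrow> 'b form \<Rightarrow> 'b form" where
  "fmult \<omega> \<eta> = (\<lambda>S. case S of
      (False, False) \<Rightarrow> \<omega> (False, False) * \<eta> (False, False)
    | (True, False) \<Rightarrow> \<omega> (True, False) * \<eta> (False, False) + \<omega> (False, False) * \<eta> (True, False)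
    | (False, True) \<Rightarrow> \<omega> (False, True) * \<eta> (False, False) + \<omega> (False, False) * \<eta> (False, True)
    | (True, True) \<Rightarrow> \<omega> (True, True) * \<eta> (False, False) + \<omega> (False, False) * \<eta> (True, True)
          + \<omega> (True, False) * \<eta> (False, True) - \<omega> (False, True) * \<eta> (True, False))"

definition of0 :: "'b::zero mat \<Rightarrow> 'b form" where
  "of0 A = (\<lambda>S. if S = (False, False) then A else 0\<^sub>m (dim_row A) (dim_col A))"

text \<open>An element I_q (x) w with w in Wedge(C^2), w = sum_S c_S xi_S.\<close>
definition wedge_const :: "(complex \<Rightarrow> 'b::ring_1) \<Rightarrow> nat \<Rightarrow> (bool \<times> bool \<Rightarrow> complex) \<Rightarrow> 'b form" where
  "wedge_const sc q c = (\<lambda>S. sc (c S) \<cdot>\<^sub>m 1\<^sub>m q)"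

text \<open>Axioms of a single degree-one derivation d on Omega = Mat_{n0}(B) (x) Wedge(C^2)
respecting matrix sizes, stated blockwise (d is the direct sum of its blocks).\<close>
definition size_resp_deriv :: "nat \<Rightarrow> (complex \<Rightarrow> 'b::ring_1) \<Rightarrow> ('b form \<Rightarrow> 'b form) \<Rightarrow> bool" where
  "size_resp_deriv n0 sc d \<longleftrightarrow>
     (\<forall>p q \<omega>. n0 \<le> p \<longrightarrow> n0 \<le> q \<longrightarrow> \<omega> \<in> blk p q \<longrightarrow> d \<omega> \<in> blk p q)
   \<and> (\<forall>p q \<omega> \<eta>. n0 \<le> p \<longrightarrow> n0 \<le> q \<longrightarrow> \<omega> \<in> blk p q \<longrightarrow> \<eta> \<in> blk p q \<longrightarrow>
        d (fadd \<omega> \<eta>) = fadd (d \<omega>) (d \<eta>))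
   \<and> (\<forall>p q \<omega> c. n0 \<le> p \<longrightarrow> n0 \<le> q \<longrightarrow> \<omega> \<in> blk p q \<longrightarrow> d (fsmult sc c \<omega>) = fsmult sc c (d \<omega>))
   \<and> (\<forall>p q \<omega> r. n0 \<le> p \<longrightarrow> n0 \<le> q \<longrightarrow> \<omega> \<in> blk p q \<longrightarrow> homog r \<omega> \<longrightarrow> homog (Suc r) (d \<omega>))
   \<and> (\<forall>p k q \<omega> \<eta> r. n0 \<le> p \<longrightarrow> n0 \<le> k \<longrightarrow> n0 \<le> q \<longrightarrow> \<omega> \<in> blk p k \<longrightarrow> \<eta> \<in> blk k q \<longrightarrow>
        homog r \<omega> \<longrightarrow>
        d (fmult \<omega> \<eta>) = fadd (fmult (d \<omega>) \<eta>) (fsmult sc ((-1) ^ r) (fmult \<omega> (d \<eta>))))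
   \<and> (\<forall>q c. n0 \<le> q \<longrightarrow> d (wedge_const sc q c) = zf q q)"

definition bdga :: "nat \<Rightarrow> (complex \<Rightarrow> 'b::ring_1) \<Rightarrow> ('b form \<Rightarrow> 'b form) \<Rightarrow> ('b form \<Rightarrow> 'b form) \<Rightarrow> bool" where
  "bdga n0 sc d db \<longleftrightarrow> unital_calg sc \<and> size_resp_deriv n0 sc d \<and> size_resp_deriv n0 sc db
   \<and> (\<forall>p q \<omega>. n0 \<le> p \<longrightarrow> n0 \<le> q \<longrightarrow> \<omega> \<in> blk p q \<longrightarrow>
        d (d \<omega>) = zf p q \<and> db (db \<omega>) = zf p q \<and> fadd (d (db \<omega>)) (db (d \<omega>)) = zf p q)"

definition const_mat :: "('b::ring_1 form \<Rightarrow> 'b form) \<Rightarrow> ('b form \<Rightarrow> 'b form) \<Rightarrow> 'b mat \<Rightarrow> bool" where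
  "const_mat d db A \<longleftrightarrow> d (of0 A) = zf (dim_row A) (dim_col A) \<and> db (of0 A) = zf (dim_row A) (dim_col A)"

end

theory Submission
  imports Defs
begin

text \<open>
  Put Y = Xi M, where M = (I - K Xi)^{-1}, so that phi = U Y V, and put
  Q = P + V U Y.
  (1) The resolvent identities Y = Xi + Y K Xi and M = I + K Y show that every derivation D
      annihilating K satisfies D Y = (I + Y K) (D Xi) M.
  (2) The commutator hypothesis [P, K Xi] = V U Xi yields the intertwining relation P M = M Q.
  (3) By (1) for d and db together with (2), the linear equation db Xi = (d Xi) P propagates
      to db Y = (d Y) Q.
  (4) In any bidifferential graded algebra, db Y = (d Y) Q for Y of degree 0 forces
      db d Y = (d Y) (d Q), and here d Q = V U (d Y).
  (5) Sandwiching with the constants U and V gives db d phi = U dY V U dY V = d phi d phi.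
\<close>

section \<open>Matrix arithmetic with dimension side conditions\<close>

text \<open>Associativity and distributivity of matrix products, stated with the dimension
  compatibilities only, so that the simplifier can discharge them.\<close>

lemma mult_assoc_dim:
  "dim_col A = dim_row B \<Longrightarrow> dim_col B = dim_row C \<Longrightarrow> A * B * C = A * (B * C)"
  by (rule assoc_mult_mat[of A "dim_row A" "dim_col A" B "dim_col B" C "dim_col C"]) auto

lemma mult_add_distrib_dim:
  "dim_col (A::'a::semiring_0 mat) = dim_row B \<Longrightarrow> dim_row B = dim_row C \<Longrightarrow>
    dim_col B = dim_col C \<Longrightarrow> A * (B + C) = A * B + A * C"
  by (rule mult_add_distrib_mat[of A "dim_row A" "dim_col A" B "dim_col B"]) auto

lemma add_mult_distrib_dim:
  "dim_col (A::'a::semiring_0 mat) = dim_row C \<Longrightarrow> dim_row A = dim_row B \<Longrightarrow>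
    dim_col A = dim_col B \<Longrightarrow> (A + B) * C = A * C + B * C"
  by (rule add_mult_distrib_mat[of A "dim_row A" "dim_col A" B C "dim_col C"]) auto

lemma mult_minus_distrib_dim:
  "dim_col (A::'a::ring mat) = dim_row B \<Longrightarrow> dim_row B = dim_row C \<Longrightarrow>
    dim_col B = dim_col C \<Longrightarrow> A * (B - C) = A * B - A * C"
  by (rule mult_minus_distrib_mat[of A "dim_row A" "dim_col A" B "dim_col B"]) auto

lemma minus_mult_distrib_dim:
  "dim_col (A::'a::ring mat) = dim_row C \<Longrightarrow> dim_row A = dim_row B \<Longrightarrow>
    dim_col A = dim_col B \<Longrightarrow> (A - B) * C = A * C - B * C"
  by (rule minus_mult_distrib_mat[of A "dim_row A" "dim_col A" B C "dim_col C"]) auto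

lemmas mat_dim_simps = mult_assoc_dim mult_add_distrib_dim add_mult_distrib_dim
  mult_minus_distrib_dim minus_mult_distrib_dim


section \<open>The algebra Omega, blockwise\<close>

lemma blk_dims: "\<omega> \<in> blk p q \<Longrightarrow> dim_row (\<omega> S) = p \<and> dim_col (\<omega> S) = q"
  unfolding blk_def carrier_mat_def by (cases S) auto

lemma blkI: "(\<And>a b. dim_row (\<omega> (a, b)) = p \<and> dim_col (\<omega> (a, b)) = q) \<Longrightarrow> \<omega> \<in> blk p q"
  unfolding blk_def carrier_mat_def by auto

lemma form_eqI: "(\<And>a b. \<omega> (a, b) = \<eta> (a, b)) \<Longrightarrow> \<omega> = \<eta>"
  by auto

lemma fmult_blk: "\<omega> \<in> blk p k \<Longrightarrow> \<eta> \<in> blk k q \<Longrightarrow> fmult \<omega> \<eta> \<in> blk p q"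
  by (rule blkI, case_tac a; case_tac b) (auto simp: fmult_def dest!: blk_dims[where S="(_, _)"])

lemma fadd_blk: "\<omega> \<in> blk p q \<Longrightarrow> \<eta> \<in> blk p q \<Longrightarrow> fadd \<omega> \<eta> \<in> blk p q"
  unfolding blk_def fadd_def by auto

lemma fsmult_blk: "\<omega> \<in> blk p q \<Longrightarrow> fsmult sc c \<omega> \<in> blk p q"
  unfolding blk_def fsmult_def by auto

lemma of0_blk: "A \<in> carrier_mat p q \<Longrightarrow> of0 A \<in> blk p q"
  unfolding blk_def of0_def by auto

lemma fmult_assoc:
  assumes "\<omega> \<in> blk p k" and "\<eta> \<in> blk k l" and "\<zeta> \<in> blk l q"
  shows "fmult (fmult \<omega> \<eta>) \<zeta> = fmult \<omega> (fmult \<eta> \<zeta>)"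
proof (rule form_eqI)
  fix a b
  show "fmult (fmult \<omega> \<eta>) \<zeta> (a, b) = fmult \<omega> (fmult \<eta> \<zeta>) (a, b)"
    using blk_dims[OF assms(1)] blk_dims[OF assms(2)] blk_dims[OF assms(3)]
    by (cases a; cases b)
      (auto simp: fmult_def mat_dim_simps algebra_simps intro!: eq_matI)
qed

lemma fmult_fadd_left:
  assumes "\<omega> \<in> blk p k" and "\<eta> \<in> blk k q" and "\<zeta> \<in> blk k q"
  shows "fmult \<omega> (fadd \<eta> \<zeta>) = fadd (fmult \<omega> \<eta>) (fmult \<omega> \<zeta>)"
proof (rule form_eqI)
  fix a b
  show "fmult \<omega> (fadd \<eta> \<zeta>) (a, b) = fadd (fmult \<omega> \<eta>) (fmult \<omega> \<zeta>) (a, b)"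
    using blk_dims[OF assms(1)] blk_dims[OF assms(2)] blk_dims[OF assms(3)]
    by (cases a; cases b)
      (auto simp: fmult_def fadd_def mat_dim_simps algebra_simps intro!: eq_matI)
qed

lemma fmult_fadd_right:
  assumes "\<omega> \<in> blk p k" and "\<eta> \<in> blk p k" and "\<zeta> \<in> blk k q"
  shows "fmult (fadd \<omega> \<eta>) \<zeta> = fadd (fmult \<omega> \<zeta>) (fmult \<eta> \<zeta>)"
proof (rule form_eqI)
  fix a b
  show "fmult (fadd \<omega> \<eta>) \<zeta> (a, b) = fadd (fmult \<omega> \<zeta>) (fmult \<eta> \<zeta>) (a, b)"
    using blk_dims[OF assms(1)] blk_dims[OF assms(2)] blk_dims[OF assms(3)]
    by (cases a; cases b)
      (auto simp: fmult_def fadd_def mat_dim_simps algebra_simps intro!: eq_matI)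
qed

lemma fmult_zf_left:
  assumes "\<eta> \<in> blk k q" shows "fmult (zf p k) \<eta> = zf p q"
  by (rule form_eqI, case_tac a; case_tac b)
    (auto simp: fmult_def zf_def blk_dims[OF assms] intro!: eq_matI)

lemma fmult_zf_right:
  assumes "\<omega> \<in> blk p k" shows "fmult \<omega> (zf k q) = zf p q"
  by (rule form_eqI, case_tac a; case_tac b)
    (auto simp: fmult_def zf_def blk_dims[OF assms] intro!: eq_matI)

lemma fmult_one_left:
  assumes "\<omega> \<in> blk p q" shows "fmult (of0 (1\<^sub>m p)) \<omega> = \<omega>"
  by (rule form_eqI, case_tac a; case_tac b)
    (auto simp: fmult_def of0_def blk_dims[OF assms] intro!: eq_matI)

lemma fmult_one_right:
  assumes "\<omega> \<in> blk p q" shows "fmult \<omega> (of0 (1\<^sub>m q)) = \<omega>"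
  by (rule form_eqI, case_tac a; case_tac b)
    (auto simp: fmult_def of0_def blk_dims[OF assms] intro!: eq_matI)

lemma fadd_zf_left:
  assumes "(\<eta>::'b::ring_1 form) \<in> blk p q" shows "fadd (zf p q) \<eta> = \<eta>"
  by (auto simp: fadd_def zf_def blk_dims[OF assms] intro!: ext eq_matI)

lemma fadd_zf_right:
  assumes "(\<eta>::'b::ring_1 form) \<in> blk p q" shows "fadd \<eta> (zf p q) = \<eta>"
  by (auto simp: fadd_def zf_def blk_dims[OF assms] intro!: ext eq_matI)

lemma fadd_assoc:
  assumes "(\<omega>::'b::ring_1 form) \<in> blk p q" and "\<eta> \<in> blk p q" and "\<zeta> \<in> blk p q"
  shows "fadd (fadd \<omega> \<eta>) \<zeta> = fadd \<omega> (fadd \<eta> \<zeta>)"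
  by (auto simp: fadd_def blk_dims[OF assms(1)] blk_dims[OF assms(2)] blk_dims[OF assms(3)]
      intro!: ext eq_matI)

lemma fadd_comm:
  assumes "(\<omega>::'b::ring_1 form) \<in> blk p q" and "\<eta> \<in> blk p q"
  shows "fadd \<omega> \<eta> = fadd \<eta> \<omega>"
  by (auto simp: fadd_def blk_dims[OF assms(1)] blk_dims[OF assms(2)] intro!: ext eq_matI)

lemma fadd_cancel_right:
  fixes \<omega> :: "'b::ring_1 form"
  assumes "\<omega> \<in> blk p q" and "\<eta> \<in> blk p q" and "\<zeta> \<in> blk p q"
    and eq: "fadd \<omega> \<zeta> = fadd \<eta> \<zeta>"
  shows "\<omega> = \<eta>"
proof (rule ext, rule eq_matI)
  fix S i j assume ij: "i < dim_row (\<eta> S)" "j < dim_col (\<eta> S)"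
  have "fadd \<omega> \<zeta> S $$ (i, j) = fadd \<eta> \<zeta> S $$ (i, j)" using eq by simp
  then show "\<omega> S $$ (i, j) = \<eta> S $$ (i, j)"
    using blk_dims[OF assms(1)] blk_dims[OF assms(2)] blk_dims[OF assms(3)] ij
    by (simp add: fadd_def)
qed (use blk_dims[OF assms(1)] blk_dims[OF assms(2)] in auto)

lemma fsmult_unit:
  assumes "sc c = 1" and "(\<omega>::'b::ring_1 form) \<in> blk p q" shows "fsmult sc c \<omega> = \<omega>"
  by (auto simp: fsmult_def assms(1) blk_dims[OF assms(2)] intro!: ext eq_matI)

lemma fsmult_zf: "fsmult (sc::complex \<Rightarrow> 'b::ring_1) c (zf p q) = zf p q"
  by (auto simp: fsmult_def zf_def intro!: ext eq_matI)

lemma fsmult_neg_unit_sum_zero: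
  fixes \<omega> :: "'b::ring_1 form"
  assumes sc: "sc c = -1" and "\<omega> \<in> blk p q" and "\<eta> \<in> blk p q"
    and eq: "fadd (fsmult sc c \<omega>) \<eta> = zf p q"
  shows "\<eta> = \<omega>"
proof (rule ext, rule eq_matI)
  fix S i j assume ij: "i < dim_row (\<omega> S)" "j < dim_col (\<omega> S)"
  have "fadd (fsmult sc c \<omega>) \<eta> S $$ (i, j) = zf p q S $$ (i, j)" using eq by simp
  then show "\<eta> S $$ (i, j) = \<omega> S $$ (i, j)"
    using blk_dims[OF assms(2)] blk_dims[OF assms(3)] ij sc
    by (simp add: fadd_def fsmult_def zf_def)
qed (use blk_dims[OF assms(2)] blk_dims[OF assms(3)] in auto)

lemma of0_mult:
  "A \<in> carrier_mat p k \<Longrightarrow> B \<in> carrier_mat k q \<Longrightarrow> fmult (of0 A) (of0 B) = of0 (A * B)"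
  by (rule form_eqI, case_tac a; case_tac b) (auto simp: fmult_def of0_def intro!: eq_matI)

lemma of0_add:
  "(A::'b::ring_1 mat) \<in> carrier_mat p q \<Longrightarrow> B \<in> carrier_mat p q \<Longrightarrow>
    of0 (A + B) = fadd (of0 A) (of0 B)"
  by (auto simp: fadd_def of0_def intro!: ext eq_matI)

lemma homog_of0: "homog 0 (of0 A)"
  by (auto simp: homog_def of0_def fdeg_def)

text \<open>The structure map of a unital complex algebra sends -1 to -1; this produces the sign
  in the graded Leibniz rule.\<close>

lemma unital_calg_minus_one:
  assumes "unital_calg sc"
  shows "sc (-1) = -1"
proof -
  from assms have add: "\<And>a b. sc (a + b) = sc a + sc b" and one: "sc 1 = 1"
    unfolding unital_calg_def by auto
  have "sc 0 = 0" using add[of 0 0] by simp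
  moreover have "sc (-1) + sc 1 = sc 0" using add[of "-1" 1] by simp
  ultimately show ?thesis using one by (simp add: eq_neg_iff_add_eq_0)
qed


lemma minus_plus_cancel_mat:
  "(A::'b::ab_group_add mat) \<in> carrier_mat p q \<Longrightarrow> B \<in> carrier_mat p q \<Longrightarrow> A - B + B = A"
  by (auto intro!: eq_matI)

lemma resolvent_identities:
  fixes K Xi M :: "'b::ring_1 mat"
  assumes K: "K \<in> carrier_mat n n" and X: "Xi \<in> carrier_mat n n" and M: "M \<in> carrier_mat n n"
    and left_inv: "M * (1\<^sub>m n - K * Xi) = 1\<^sub>m n" and right_inv: "(1\<^sub>m n - K * Xi) * M = 1\<^sub>m n"
  shows "Xi * M = Xi + Xi * M * (K * Xi)" and "M = 1\<^sub>m n + K * (Xi * M)"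
proof -
  have KX: "K * Xi \<in> carrier_mat n n" and Y: "Xi * M \<in> carrier_mat n n"
    and YKX: "Xi * M * (K * Xi) \<in> carrier_mat n n" and KY: "K * (Xi * M) \<in> carrier_mat n n"
    using K X M by auto
  note dims = carrier_matD[OF K] carrier_matD[OF X] carrier_matD[OF M]
  have "Xi = Xi * (M * (1\<^sub>m n - K * Xi))" using left_inv X by simp
  also have "\<dots> = Xi * M * (1\<^sub>m n - K * Xi)" by (simp add: mult_assoc_dim dims)
  also have "\<dots> = Xi * M - Xi * M * (K * Xi)"
    using Y KX by (simp add: mult_minus_distrib_dim dims)
  finally have Xi_eq: "Xi * M - Xi * M * (K * Xi) = Xi" by (rule sym)
  show "Xi * M = Xi + Xi * M * (K * Xi)"
    using minus_plus_cancel_mat[OF Y YKX] by (simp only: Xi_eq)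
  have "1\<^sub>m n = (1\<^sub>m n - K * Xi) * M" using right_inv by simp
  also have "\<dots> = M - K * Xi * M" using M KX by (simp add: minus_mult_distrib_dim dims)
  also have "\<dots> = M - K * (Xi * M)" by (simp add: mult_assoc_dim dims)
  finally have one_eq: "M - K * (Xi * M) = 1\<^sub>m n" by (rule sym)
  show "M = 1\<^sub>m n + K * (Xi * M)"
    using minus_plus_cancel_mat[OF M KY] by (simp only: one_eq)
qed

text \<open>The commutator relation [P, K Xi] = V U Xi conjugates P by M into
  Q = P + V U Xi M: indeed (I - K Xi) P = P (I - K Xi) + V U Xi.\<close>

lemma resolvent_intertwining:
  fixes P K Xi M V U :: "'b::ring_1 mat"
  assumes P: "P \<in> carrier_mat n n" and K: "K \<in> carrier_mat n n" and X: "Xi \<in> carrier_mat n n"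
    and M: "M \<in> carrier_mat n n" and V: "V \<in> carrier_mat n m" and U: "U \<in> carrier_mat m n"
    and comm: "P * (K * Xi) - (K * Xi) * P = V * U * Xi"
    and left_inv: "M * (1\<^sub>m n - K * Xi) = 1\<^sub>m n" and right_inv: "(1\<^sub>m n - K * Xi) * M = 1\<^sub>m n"
  shows "P * M = M * (P + V * (U * (Xi * M)))"
proof -
  define A where "A = 1\<^sub>m n - K * Xi"
  have A: "A \<in> carrier_mat n n" using K X by (auto simp: A_def intro!: minus_carrier_mat)
  note dims = carrier_matD[OF P] carrier_matD[OF K] carrier_matD[OF X] carrier_matD[OF M]
    carrier_matD[OF V] carrier_matD[OF U] carrier_matD[OF A]
  have AP: "A * P = P * A + V * U * Xi"
  proof -
    have AP_eq: "A * P = P - K * Xi * P" and PA_eq: "P * A = P - P * (K * Xi)"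
      unfolding A_def using P K X by (simp_all add: mat_dim_simps dims)
    show ?thesis unfolding AP_eq PA_eq
    proof (rule eq_matI)
      fix i j assume "i < dim_row (P - P * (K * Xi) + V * U * Xi)"
        and "j < dim_col (P - P * (K * Xi) + V * U * Xi)"
      moreover have "(P * (K * Xi) - K * Xi * P) $$ (i, j) = (V * U * Xi) $$ (i, j)"
        using comm by simp
      ultimately show "(P - K * Xi * P) $$ (i, j) = (P - P * (K * Xi) + V * U * Xi) $$ (i, j)"
        by (simp add: dims algebra_simps)
    qed (simp_all add: dims)
  qed
  have "P * M = (M * A) * P * M" using left_inv P M by (simp add: A_def)
  also have "\<dots> = M * ((A * P) * M)" using dims by (simp add: mult_assoc_dim)
  also have "\<dots> = M * ((P * A) * M + (V * U * Xi) * M)"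
    unfolding AP using P A V U X M by (simp add: add_mult_distrib_dim dims)
  also have "(P * A) * M = P" using right_inv P by (simp add: A_def mult_assoc_dim dims)
  also have "(V * U * Xi) * M = V * (U * (Xi * M))" using dims by (simp add: mult_assoc_dim)
  finally show ?thesis .
qed


section \<open>Size-respecting derivations\<close>

locale sized_derivation =
  fixes n0 :: nat and sc :: "complex \<Rightarrow> 'b::ring_1" and D :: "'b form \<Rightarrow> 'b form"
  assumes calg: "unital_calg sc" and deriv: "size_resp_deriv n0 sc D"
begin

lemma blk_closed: "n0 \<le> p \<Longrightarrow> n0 \<le> q \<Longrightarrow> \<omega> \<in> blk p q \<Longrightarrow> D \<omega> \<in> blk p q"
  using deriv unfolding size_resp_deriv_def by auto

lemma additive:
  "n0 \<le> p \<Longrightarrow> n0 \<le> q \<Longrightarrow> \<omega> \<in> blk p q \<Longrightarrow> \<eta> \<in> blk p q \<Longrightarrow>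
    D (fadd \<omega> \<eta>) = fadd (D \<omega>) (D \<eta>)"
  using deriv unfolding size_resp_deriv_def by blast

lemma raises_degree:
  "n0 \<le> p \<Longrightarrow> n0 \<le> q \<Longrightarrow> \<omega> \<in> blk p q \<Longrightarrow> homog r \<omega> \<Longrightarrow> homog (Suc r) (D \<omega>)"
  using deriv unfolding size_resp_deriv_def by blast

lemma leibniz:
  "n0 \<le> p \<Longrightarrow> n0 \<le> k \<Longrightarrow> n0 \<le> q \<Longrightarrow> \<omega> \<in> blk p k \<Longrightarrow> \<eta> \<in> blk k q \<Longrightarrow> homog r \<omega> \<Longrightarrow>
    D (fmult \<omega> \<eta>) = fadd (fmult (D \<omega>) \<eta>) (fsmult sc ((-1) ^ r) (fmult \<omega> (D \<eta>)))"
  using deriv unfolding size_resp_deriv_def by blast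

lemma leibniz_deg0:
  assumes "n0 \<le> p" "n0 \<le> k" "n0 \<le> q" and "\<omega> \<in> blk p k" and "\<eta> \<in> blk k q"
    and "homog 0 \<omega>"
  shows "D (fmult \<omega> \<eta>) = fadd (fmult (D \<omega>) \<eta>) (fmult \<omega> (D \<eta>))"
proof -
  have "sc ((-1) ^ 0) = 1" using calg unfolding unital_calg_def by simp
  then show ?thesis
    using leibniz[OF assms] fsmult_unit[of sc 1, OF _ fmult_blk[OF assms(4) blk_closed[OF assms(2,3,5)]]]
    by simp
qed

lemma const_left:
  assumes "n0 \<le> p" "n0 \<le> k" "n0 \<le> q" and C: "C \<in> carrier_mat p k"
    and DC: "D (of0 C) = zf p k" and w: "\<omega> \<in> blk k q"
  shows "D (fmult (of0 C) \<omega>) = fmult (of0 C) (D \<omega>)"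
  using leibniz_deg0[OF assms(1-3) of0_blk[OF C] w homog_of0] DC fmult_zf_left[OF w]
    fadd_zf_left[OF fmult_blk[OF of0_blk[OF C] blk_closed[OF assms(2,3) w]]]
  by simp

lemma const_right:
  assumes "n0 \<le> p" "n0 \<le> k" "n0 \<le> q" and C: "C \<in> carrier_mat k q"
    and DC: "D (of0 C) = zf k q" and w: "\<omega> \<in> blk p k" and "homog r \<omega>"
  shows "D (fmult \<omega> (of0 C)) = fmult (D \<omega>) (of0 C)"
  using leibniz[OF assms(1-3) w of0_blk[OF C] assms(7)] DC fmult_zf_right[OF w] fsmult_zf[of sc "(-1) ^ r"]
    fadd_zf_right[OF fmult_blk[OF blk_closed[OF assms(1,2) w] of0_blk[OF C]]]
  by simp

lemma const_sandwich:
  assumes "n0 \<le> p" "n0 \<le> k" "n0 \<le> l" "n0 \<le> q"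
    and A: "A \<in> carrier_mat p k" and DA: "D (of0 A) = zf p k"
    and C: "C \<in> carrier_mat l q" and DC: "D (of0 C) = zf l q"
    and w: "\<omega> \<in> blk k l" and "homog r \<omega>"
  shows "D (fmult (of0 A) (fmult \<omega> (of0 C))) = fmult (of0 A) (fmult (D \<omega>) (of0 C))"
  using const_left[OF assms(1,2,4) A DA fmult_blk[OF w of0_blk[OF C]]]
    const_right[OF assms(2-4) C DC w assms(10)]
  by simp

text \<open>Derivative of Y = Xi M with M = (I - K Xi)^{-1} and K constant, from the resolvent
  identities Y = Xi + Y K Xi and M = I + K Y: differentiating the first and multiplying by M
  from the right, the term (D Y) K Xi M = (D Y) K Y cancels against (D Y)(M - I), leaving
  D Y = (I + Y K) (D Xi) M.\<close>

lemma resolvent_deriv: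
  fixes Xi K M :: "'b mat"
  assumes n: "n0 \<le> n" and K: "K \<in> carrier_mat n n" and X: "Xi \<in> carrier_mat n n"
    and M: "M \<in> carrier_mat n n" and DK: "D (of0 K) = zf n n"
    and left_inv: "M * (1\<^sub>m n - K * Xi) = 1\<^sub>m n" and right_inv: "(1\<^sub>m n - K * Xi) * M = 1\<^sub>m n"
  shows "D (of0 (Xi * M)) = fmult (of0 (1\<^sub>m n + Xi * M * K)) (fmult (D (of0 Xi)) (of0 M))"
proof -
  define Y where "Y = Xi * M"
  have Y: "Y \<in> carrier_mat n n" using X M by (simp add: Y_def)
  note res = resolvent_identities[OF K X M left_inv right_inv, folded Y_def]
  define x where "x = of0 Xi"
  define y where "y = of0 Y"
  define k where "k = of0 K"
  define m where "m = of0 M"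
  define one where "one = of0 (1\<^sub>m n :: 'b mat)"
  define dx where "dx = D x"
  define dy where "dy = D y"
  have b: "x \<in> blk n n" "y \<in> blk n n" "k \<in> blk n n" "m \<in> blk n n" "one \<in> blk n n"
    using X Y K M by (auto simp: x_def y_def k_def m_def one_def of0_blk)
  have bd: "dx \<in> blk n n" "dy \<in> blk n n" using b blk_closed[OF n n] by (auto simp: dx_def dy_def)
  have FM: "\<And>a c. a \<in> blk n n \<Longrightarrow> c \<in> blk n n \<Longrightarrow> fmult a c \<in> blk n n"
    and FA: "\<And>a c. a \<in> blk n n \<Longrightarrow> c \<in> blk n n \<Longrightarrow> fadd a c \<in> blk n n"
    by (rule fmult_blk, assumption+) (rule fadd_blk)
  have AS: "\<And>a c e. a \<in> blk n n \<Longrightarrow> c \<in> blk n n \<Longrightarrow> e \<in> blk n n \<Longrightarrow>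
      fmult (fmult a c) e = fmult a (fmult c e)"
    by (rule fmult_assoc)
  have xm: "fmult x m = y" using of0_mult[OF X M] by (simp add: x_def m_def y_def Y_def)
  have "y = of0 (Xi + Y * (K * Xi))" unfolding y_def by (rule arg_cong[OF res(1)])
  also have "\<dots> = fadd x (fmult y (fmult k x))"
    using X Y K by (simp add: y_def x_def k_def of0_add[of _ n n] of0_mult[of _ n n _ n])
  finally have y_eq: "y = fadd x (fmult y (fmult k x))" .
  have "m = of0 (1\<^sub>m n + K * Y)" unfolding m_def by (rule arg_cong[OF res(2)])
  also have "\<dots> = fadd one (fmult k y)"
    using Y K by (simp add: one_def k_def y_def of0_add[of _ n n] of0_mult[of _ n n _ n])
  finally have m_eq: "m = fadd one (fmult k y)" .
  have "dy = fadd dx (D (fmult y (fmult k x)))"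
    using arg_cong[OF y_eq, of D] additive[OF n n b(1) FM[OF b(2) FM[OF b(3,1)]]]
    by (simp add: dy_def dx_def)
  also have "D (fmult y (fmult k x)) = fadd (fmult dy (fmult k x)) (fmult y (fmult k dx))"
    using leibniz_deg0[OF n n n b(2) FM[OF b(3,1)]] const_left[OF n n n K DK b(1)]
    by (simp add: y_def k_def dy_def dx_def x_def homog_of0)
  finally have dy_eq: "dy = fadd dx (fadd (fmult dy (fmult k x)) (fmult y (fmult k dx)))" .
  define Z where "Z = fmult dy (fmult k y)"
  define W where "W = fmult y (fmult k (fmult dx m))"
  have bZW: "Z \<in> blk n n" "W \<in> blk n n" using FM b bd by (auto simp: Z_def W_def)
  text \<open>Expand (D Y) M in two ways.\<close>
  have "fmult dy m = fadd (fmult dx m)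
      (fadd (fmult (fmult dy (fmult k x)) m) (fmult (fmult y (fmult k dx)) m))"
    by (subst dy_eq, simp only: fmult_fadd_right[OF bd(1) FA[OF FM[OF bd(2) FM[OF b(3,1)]]
          FM[OF b(2) FM[OF b(3) bd(1)]]] b(4)]
        fmult_fadd_right[OF FM[OF bd(2) FM[OF b(3,1)]] FM[OF b(2) FM[OF b(3) bd(1)]] b(4)])
  also have "fmult (fmult dy (fmult k x)) m = Z"
    by (simp only: Z_def AS[OF bd(2) FM[OF b(3,1)] b(4)] AS[OF b(3,1,4)] xm)
  also have "fmult (fmult y (fmult k dx)) m = W"
    by (simp only: W_def AS[OF b(2) FM[OF b(3) bd(1)] b(4)] AS[OF b(3) bd(1) b(4)])
  finally have "fmult dy m = fadd (fmult dx m) (fadd Z W)" .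
  moreover have "fmult dy m = fadd dy Z"
    using arg_cong[OF m_eq, of "fmult dy"] fmult_fadd_left[OF bd(2) b(5) FM[OF b(3,2)]]
      fmult_one_right[OF bd(2)]
    by (simp add: Z_def one_def)
  ultimately have "fadd dy Z = fadd (fadd (fmult dx m) W) Z"
    using fadd_assoc[OF FM[OF bd(1) b(4)] bZW(2) bZW(1)] fadd_comm[OF bZW] by simp
  then have "dy = fadd (fmult dx m) W"
    using fadd_cancel_right[OF bd(2) FA[OF FM[OF bd(1) b(4)] bZW(2)] bZW(1)] by simp
  also have "\<dots> = fmult (fadd one (fmult y k)) (fmult dx m)"
    using fmult_fadd_right[OF b(5) FM[OF b(2,3)] FM[OF bd(1) b(4)]]
      fmult_one_left[OF FM[OF bd(1) b(4)]] AS[OF b(2,3) FM[OF bd(1) b(4)]]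
    by (simp add: W_def one_def)
  also have "fadd one (fmult y k) = of0 (1\<^sub>m n + Y * K)"
    unfolding one_def y_def k_def of0_mult[OF Y K]
    by (rule of0_add[OF one_carrier_mat mult_carrier_mat[OF Y K], symmetric])
  finally show ?thesis by (simp only: dy_def dx_def y_def x_def m_def Y_def)
qed

end


section \<open>Bidifferential graded algebras\<close>

locale bidiff_algebra =
  fixes n0 :: nat and sc :: "complex \<Rightarrow> 'b::ring_1" and d db :: "'b form \<Rightarrow> 'b form"
  assumes bdga: "bdga n0 sc d db"
begin

sublocale d: sized_derivation n0 sc d
  using bdga by unfold_locales (auto simp: bdga_def)

sublocale db: sized_derivation n0 sc db
  using bdga by unfold_locales (auto simp: bdga_def)

lemma anticommute:
  "n0 \<le> p \<Longrightarrow> n0 \<le> q \<Longrightarrow> \<omega> \<in> blk p q \<Longrightarrow> fadd (d (db \<omega>)) (db (d \<omega>)) = zf p q"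
  and d_square: "n0 \<le> p \<Longrightarrow> n0 \<le> q \<Longrightarrow> \<omega> \<in> blk p q \<Longrightarrow> d (d \<omega>) = zf p q"
  using bdga unfolding bdga_def by blast+

text \<open>If db Y = (d Y) Q with Y of degree 0, then applying d gives d db Y = -(d Y)(d Q), since
  d^2 = 0 and d Y has degree 1; anticommutativity of d and db turns this into
  db d Y = (d Y)(d Q).\<close>

lemma dbar_d_of_linear:
  assumes p: "n0 \<le> p" and k: "n0 \<le> k" and y: "y \<in> blk p k" and "homog 0 y"
    and q: "q \<in> blk k k" and lin: "db y = fmult (d y) q"
  shows "db (d y) = fmult (d y) (d q)"
proof -
  let ?G = "fmult (d y) (d q)"
  have dy: "d y \<in> blk p k" by (rule d.blk_closed[OF p k y])
  have G: "?G \<in> blk p k" by (rule fmult_blk[OF dy d.blk_closed[OF k k q]])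
  have "d (db y) = fadd (fmult (d (d y)) q) (fsmult sc ((-1) ^ Suc 0) ?G)"
    unfolding lin by (rule d.leibniz[OF p k k dy q d.raises_degree[OF p k y \<open>homog 0 y\<close>]])
  then have "d (db y) = fsmult sc (-1) ?G"
    using d_square[OF p k y] fmult_zf_left[OF q] fadd_zf_left[OF fsmult_blk[OF G]] by simp
  then show ?thesis
    using fsmult_neg_unit_sum_zero[of sc "-1", OF unital_calg_minus_one[OF d.calg] G
        db.blk_closed[OF p k dy]] anticommute[OF p k y]
    by simp
qed

end


context bidiff_algebra
begin

lemma dbar_resolvent:
  fixes P K Xi M V U :: "'b mat"
  assumes n: "n0 \<le> n" and P: "P \<in> carrier_mat n n" and K: "K \<in> carrier_mat n n"
    and X: "Xi \<in> carrier_mat n n" and M: "M \<in> carrier_mat n n"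
    and V: "V \<in> carrier_mat n m" and U: "U \<in> carrier_mat m n"
    and dK: "d (of0 K) = zf n n" and dbK: "db (of0 K) = zf n n"
    and lin: "db (of0 Xi) = fmult (d (of0 Xi)) (of0 P)"
    and comm: "P * (K * Xi) - (K * Xi) * P = V * U * Xi"
    and left_inv: "M * (1\<^sub>m n - K * Xi) = 1\<^sub>m n" and right_inv: "(1\<^sub>m n - K * Xi) * M = 1\<^sub>m n"
  shows "db (of0 (Xi * M)) = fmult (d (of0 (Xi * M))) (of0 (P + V * (U * (Xi * M))))"
proof -
  define Y where "Y = Xi * M"
  define N where "N = of0 (1\<^sub>m n + Y * K)"
  define Q where "Q = P + V * (U * Y)"
  have Y: "Y \<in> carrier_mat n n" and Q: "Q \<in> carrier_mat n n" and NB: "N \<in> blk n n"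
    using X M K P V U by (auto simp: Y_def Q_def N_def intro!: of0_blk)
  have dY: "d (of0 Y) = fmult N (fmult (d (of0 Xi)) (of0 M))"
    using d.resolvent_deriv[OF n K X M dK left_inv right_inv] by (simp add: N_def Y_def)
  have "db (of0 Y) = fmult N (fmult (fmult (d (of0 Xi)) (of0 P)) (of0 M))"
    using db.resolvent_deriv[OF n K X M dbK left_inv right_inv] lin by (simp add: N_def Y_def)
  also have "fmult (fmult (d (of0 Xi)) (of0 P)) (of0 M) = fmult (d (of0 Xi)) (of0 (M * Q))"
    using resolvent_intertwining[OF P K X M V U comm left_inv right_inv] P M
      fmult_assoc[OF d.blk_closed[OF n n of0_blk[OF X]] of0_blk[OF P] of0_blk[OF M]]
    by (simp add: of0_mult Q_def Y_def)
  also have "fmult N (fmult (d (of0 Xi)) (of0 (M * Q))) = fmult (d (of0 Y)) (of0 Q)"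
    using dY fmult_assoc[OF d.blk_closed[OF n n of0_blk[OF X]] of0_blk[OF M] of0_blk[OF Q]]
      fmult_assoc[OF NB fmult_blk[OF d.blk_closed[OF n n of0_blk[OF X]] of0_blk[OF M]] of0_blk[OF Q]]
      of0_mult[OF M Q]
    by simp
  finally show ?thesis by (simp add: Y_def Q_def)
qed

text \<open>Steps (4) and (5): with Q = P + V U Y and P, U, V constant, d Q = V U (d Y), and
  phi = U Y V solves db d phi = d phi d phi.\<close>

lemma sandwich_solution:
  fixes P Y V U :: "'b mat"
  assumes n: "n0 \<le> n" and m: "n0 \<le> m" and P: "P \<in> carrier_mat n n"
    and Y: "Y \<in> carrier_mat n n" and V: "V \<in> carrier_mat n m" and U: "U \<in> carrier_mat m n"
    and cP: "const_mat d db P" and cV: "const_mat d db V" and cU: "const_mat d db U"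
    and lin: "db (of0 Y) = fmult (d (of0 Y)) (of0 (P + V * (U * Y)))"
  shows "db (d (of0 (U * Y * V))) = fmult (d (of0 (U * Y * V))) (d (of0 (U * Y * V)))"
proof -
  define u where "u = of0 U"
  define v where "v = of0 V"
  define dy where "dy = d (of0 Y)"
  have b: "u \<in> blk m n" "v \<in> blk n m" "dy \<in> blk n n" "of0 Y \<in> blk n n"
    using U V Y d.blk_closed[OF n n] by (auto simp: u_def v_def dy_def of0_blk)
  have dy_deg: "homog 1 dy" using d.raises_degree[OF n n b(4) homog_of0] by (simp add: dy_def)
  have const_eqs: "d (of0 P) = zf n n" "d (of0 V) = zf n m" "d (of0 U) = zf m n"
      "db (of0 V) = zf n m" "db (of0 U) = zf m n"
    using cP cV cU P V U by (auto simp: const_mat_def)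
  have "d (of0 (P + V * (U * Y))) = fadd (d (of0 P)) (d (fmult v (fmult u (of0 Y))))"
    using d.additive[OF n n of0_blk[OF P] of0_blk[of "V * (U * Y)" n n]] P V U Y
    by (simp add: of0_add[of _ n n] of0_mult[of _ n m _ n] of0_mult[of _ m n _ n] u_def v_def)
  also have "\<dots> = fmult v (fmult u dy)"
    using const_eqs P fadd_zf_left[OF fmult_blk[OF b(2) fmult_blk[OF b(1,3)]]]
      d.const_left[OF n m n V _ fmult_blk[OF b(1,4)]] d.const_left[OF m n n U _ b(4)]
    by (simp add: u_def v_def dy_def)
  finally have dbdy: "db dy = fmult dy (fmult v (fmult u dy))"
    using dbar_d_of_linear[OF n n b(4) homog_of0 of0_blk[of _ n n], OF _ lin] P V U Y
    by (simp add: dy_def)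
  have phi: "of0 (U * Y * V) = fmult u (fmult (of0 Y) v)"
    using U Y V by (simp add: u_def v_def of0_mult[of _ n n _ m] of0_mult[of _ m n _ m])
  have dphi: "d (of0 (U * Y * V)) = fmult u (fmult dy v)"
    unfolding phi u_def v_def dy_def
    using d.const_sandwich[OF m n n m U _ V _ b(4) homog_of0] const_eqs by simp
  have "db (d (of0 (U * Y * V))) = fmult u (fmult (db dy) v)"
    unfolding dphi u_def v_def
    using db.const_sandwich[OF m n n m U _ V _ b(3) dy_deg] const_eqs by simp
  also have "\<dots> = fmult u (fmult dy (fmult v (fmult u (fmult dy v))))"
    unfolding dbdy
    using fmult_assoc[OF b(3) fmult_blk[OF b(2) fmult_blk[OF b(1,3)]] b(2)]
      fmult_assoc[OF b(2) fmult_blk[OF b(1,3)] b(2)] fmult_assoc[OF b(1,3,2)]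
    by simp
  also have "\<dots> = fmult (fmult u (fmult dy v)) (fmult u (fmult dy v))"
    using fmult_assoc[OF b(1) fmult_blk[OF b(3,2)] fmult_blk[OF b(1) fmult_blk[OF b(3,2)]]]
      fmult_assoc[OF b(3,2) fmult_blk[OF b(1) fmult_blk[OF b(3,2)]]]
    by simp
  finally show ?thesis by (simp add: dphi)
qed

end

theorem corollary2p4:
  fixes n0 n m :: nat
    and sc :: "complex \<Rightarrow> 'b::ring_1"
    and d db :: "'b form \<Rightarrow> 'b form"
    and P K Xi M :: "'b mat" and V U :: "'b mat"
  assumes "bdga n0 sc d db"
    and "n0 \<le> n" and "n0 \<le> m"
    and "P \<in> carrier_mat n n" and "K \<in> carrier_mat n n"
    and "V \<in> carrier_mat n m" and "U \<in> carrier_mat m n"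
    and "Xi \<in> carrier_mat n n"
    and "const_mat d db P" and "const_mat d db K" and "const_mat d db V" and "const_mat d db U"
    and "db (of0 Xi) = fmult (d (of0 Xi)) (of0 P)"
    and "P * (K * Xi) - (K * Xi) * P = V * U * Xi"
    and "M \<in> carrier_mat n n"
    and "(1\<^sub>m n - K * Xi) * M = 1\<^sub>m n" and "M * (1\<^sub>m n - K * Xi) = 1\<^sub>m n"
  shows "db (d (of0 (U * Xi * M * V))) = fmult (d (of0 (U * Xi * M * V))) (d (of0 (U * Xi * M * V)))"
proof -
  interpret bidiff_algebra n0 sc d db by unfold_locales (rule assms(1))
  have Y: "Xi * M \<in> carrier_mat n n" using assms(8,15) by simp
  have "db (of0 (Xi * M)) = fmult (d (of0 (Xi * M))) (of0 (P + V * (U * (Xi * M))))"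
    using dbar_resolvent[OF assms(2,4,5,8,15,6,7) _ _ assms(13,14,17,16)] assms(5,10)
    by (simp add: const_mat_def)
  moreover have "U * Xi * M * V = U * (Xi * M) * V"
    using assms(7,8,15) by (simp add: mult_assoc_dim)
  ultimately show ?thesis
    using sandwich_solution[OF assms(2,3,4) Y assms(6,7,9,11,12)] by simp
qed

end
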